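(* There is an absolute constant $c_3>0$ such that the following holds. Let $Q\in\mathbb{N}$, $\mathcal{S}\subseteq B(0,Q^{1/2})\cap(\mathbb{Z}[i]\setminus\{0\})$, $\Delta>0$, $\tau=\Delta^{-1/4}$. Let $b,r\in\mathbb{Z}[i]$ with $(b,r)=1$ and $0<|r|\le\tau$, and let $z\in\mathbb{C}$ with $\Delta^{1/2}\le|z|<\frac{2}{|r|\tau}$. Let $\overline{b}\in\mathbb{Z}[i]$ satisfy $\overline{b}b\equiv1\bmod r$. Then $$P\Big(\frac{b}{r}+z\Big)\le 16+c_3\sum_{t\mid r}\ \sum_{\substack{m\in\mathbb{Z}[i],\ 0<|m|\le\frac{3|rz|\sqrt{Q}}{|t|}\\ (m,\frac{r}{t})=1}}A_t\Big(\frac{\sqrt{Q\Delta}}{|z||t|},\frac{r}{t},-\overline{b}m\Big).$$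
   Context: $\mathbb{Z}[i]$ are the Gaussian integers; $B(y,u)=\{w\in\mathbb{C}:|w-y|\le u\}$. The sum over $t\mid r$ runs over a maximal set of mutually non-associate divisors $t$ of $r$ in $\mathbb{Z}[i]$. For $\alpha\in\mathbb{C}$, $$P(\alpha)=\Big|\Big\{(a,q)\in\mathbb{Z}[i]\times\mathcal{S}:\ (a,q)=1,\ \Big|\frac{a}{q}-\alpha\Big|\le\Delta^{1/2}\Big\}\Big|.$$ For $t\in\mathbb{Z}[i]\setminus\{0\}$, $\mathcal{S}_t=\{q\in\mathbb{Z}[i]:tq\in\mathcal{S}\}$, and for $u\ge0$, $k\in\mathbb{Z}[i]\setminus\{0\}$, $l\in\mathbb{Z}[i]$, $$A_t(u,k,l)=\sup_{y\in\mathbb{C},\ |y|\le\sqrt{Q}/|t|}\big|\{q\in\mathcal{S}_t\cap B(y,u):\ q\equiv l\bmod k\}\big|.$$ *)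

theory Defs
  imports "HOL-Analysis.Analysis"
begin

definition gauss :: "complex set" where
  "gauss = {z. Re z \<in> \<int> \<and> Im z \<in> \<int>}"

definition gdvd :: "complex \<Rightarrow> complex \<Rightarrow> bool" where
  "gdvd a b \<longleftrightarrow> a \<in> gauss \<and> b \<in> gauss \<and> (\<exists>c\<in>gauss. b = a * c)"

definition gassoc :: "complex \<Rightarrow> complex \<Rightarrow> bool" where
  "gassoc a b \<longleftrightarrow> gdvd a b \<and> gdvd b a"

definition gcoprime :: "complex \<Rightarrow> complex \<Rightarrow> bool" where
  "gcoprime a b \<longleftrightarrow> (\<forall>d. gdvd d a \<and> gdvd d b \<longrightarrow> gdvd d 1)"

definition gcong :: "complex \<Rightarrow> complex \<Rightarrow> complex \<Rightarrow> bool" where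
  "gcong a b m \<longleftrightarrow> gdvd m (a - b)"

definition divisor_reps :: "complex set \<Rightarrow> complex \<Rightarrow> bool" where
  "divisor_reps T r \<longleftrightarrow>
     T \<subseteq> {t. gdvd t r} \<and>
     (\<forall>t1\<in>T. \<forall>t2\<in>T. gassoc t1 t2 \<longrightarrow> t1 = t2) \<and>
     (\<forall>d. gdvd d r \<longrightarrow> (\<exists>t\<in>T. gassoc d t))"

definition Pcount :: "complex set \<Rightarrow> real \<Rightarrow> complex \<Rightarrow> nat" where
  "Pcount S \<Delta> \<alpha> = card {(a, q). a \<in> gauss \<and> q \<in> S \<and> gcoprime a q \<and>
                                  norm (a / q - \<alpha>) \<le> sqrt \<Delta>}"

definition S_t :: "complex set \<Rightarrow> complex \<Rightarrow> complex set" where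
  "S_t S t = {q \<in> gauss. t * q \<in> S}"

definition A_t :: "complex set \<Rightarrow> nat \<Rightarrow> complex \<Rightarrow> real \<Rightarrow> complex \<Rightarrow> complex \<Rightarrow> real" where
  "A_t S Q t u k l = (SUP y\<in>{y::complex. norm y \<le> sqrt (real Q) / norm t}.
       real (card {q \<in> S_t S t \<inter> cball y u. gcong q l k}))"

end

theory Submission
  imports Defs
begin

text \<open>
  Split the pairs \<open>(a, q)\<close> counted by \<open>P(b/r + z)\<close> according to whether \<open>a/q = b/r\<close>.
  If so, \<open>(a, q)\<close> is a unit multiple of \<open>(b, r)\<close>, and the units are among the 9 Gaussian
  integers of the closed unit disc.
  Otherwise let \<open>t\<close> be the representative of \<open>gcd(q, r)\<close>, \<open>q = t q'\<close> and
  \<open>a r - b q = t m \<noteq> 0\<close>. Then \<open>(m, r/t) = 1\<close>, \<open>q' \<equiv> -bbar m mod r/t\<close>, and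
  \<open>|a/q - b/r - z| \<le> sqrt \<Delta> \<le> |z|\<close> gives \<open>|m| \<le> 3 |r z| sqrt Q / |t|\<close> and
  \<open>|q' - m/(z r)| \<le> sqrt (Q \<Delta>) / (|z| |t|)\<close>. As \<open>(a, q)\<close> is determined by \<open>(t, m, q')\<close>,
  counting the admissible \<open>q'\<close> in these balls proves the bound with \<open>c3 = 1\<close>.
\<close>

lemma gauss_add [intro]: "a \<in> gauss \<Longrightarrow> b \<in> gauss \<Longrightarrow> a + b \<in> gauss"
  and gauss_diff [intro]: "a \<in> gauss \<Longrightarrow> b \<in> gauss \<Longrightarrow> a - b \<in> gauss"
  and gauss_mult [intro]: "a \<in> gauss \<Longrightarrow> b \<in> gauss \<Longrightarrow> a * b \<in> gauss"
  and gauss_0 [simp, intro]: "0 \<in> gauss"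
  and gauss_1 [simp, intro]: "1 \<in> gauss"
  by (simp_all add: gauss_def)

lemma gauss_norm_sq_Ints: "a \<in> gauss \<Longrightarrow> (norm a)^2 \<in> \<int>"
  by (auto simp: gauss_def cmod_power2)

lemma gauss_norm_ge_1:
  assumes "a \<in> gauss" "a \<noteq> 0"
  shows "1 \<le> norm a"
proof -
  obtain n where n: "(norm a)^2 = of_int n"
    using gauss_norm_sq_Ints[OF assms(1)] by (elim Ints_cases)
  have "0 < (norm a)^2"
    using assms(2) by simp
  then have "1 \<le> (norm a)^2"
    unfolding n by simp
  then show ?thesis
    using power2_le_imp_le[of 1 "norm a"] by simp
qed

lemma gauss_norm_less_imp_floor_less:
  assumes "v \<in> gauss" "w \<in> gauss" "norm v < norm w"
  shows "nat \<lfloor>(norm v)^2\<rfloor> < nat \<lfloor>(norm w)^2\<rfloor>"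
proof -
  obtain m n where mn: "(norm v)^2 = of_int m" "(norm w)^2 = of_int n"
    using gauss_norm_sq_Ints[OF assms(1)] gauss_norm_sq_Ints[OF assms(2)] by (elim Ints_cases)
  have "(norm v)^2 < (norm w)^2"
    using assms(3) by (simp add: power_strict_mono)
  moreover have "0 \<le> (norm v)^2"
    by simp
  ultimately show ?thesis
    unfolding mn by simp
qed

lemma gauss_cball_subset_grid:
  "gauss \<inter> cball 0 R \<subseteq>
     (\<lambda>(x, y). Complex (of_int x) (of_int y)) ` ({-\<lceil>R\<rceil>..\<lceil>R\<rceil>} \<times> {-\<lceil>R\<rceil>..\<lceil>R\<rceil>})"
proof
  fix w assume w: "w \<in> gauss \<inter> cball 0 R"
  then obtain x y where xy: "Re w = of_int x" "Im w = of_int y"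
    by (auto simp: gauss_def elim!: Ints_cases)
  have "\<bar>Re w\<bar> \<le> R" "\<bar>Im w\<bar> \<le> R"
    using w abs_Re_le_cmod[of w] abs_Im_le_cmod[of w] by auto
  then have "of_int \<bar>x\<bar> \<le> real_of_int \<lceil>R\<rceil>" "of_int \<bar>y\<bar> \<le> real_of_int \<lceil>R\<rceil>"
    using xy le_of_int_ceiling[of R] by linarith+
  then have "(x, y) \<in> {-\<lceil>R\<rceil>..\<lceil>R\<rceil>} \<times> {-\<lceil>R\<rceil>..\<lceil>R\<rceil>}"
    by (simp only: of_int_le_iff) auto
  moreover have "w = (\<lambda>(x, y). Complex (of_int x) (of_int y)) (x, y)"
    using xy by (simp add: complex_eq_iff)
  ultimately show "w \<in> (\<lambda>(x, y). Complex (of_int x) (of_int y)) ` ({-\<lceil>R\<rceil>..\<lceil>R\<rceil>} \<times> {-\<lceil>R\<rceil>..\<lceil>R\<rceil>})"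
    by (rule rev_image_eqI)
qed

lemma finite_gauss_cball: "finite (gauss \<inter> cball 0 R)"
  by (rule finite_subset[OF gauss_cball_subset_grid]) auto

lemma card_gauss_unit_cball_le: "card (gauss \<inter> cball 0 1) \<le> 9"
proof -
  have "card (gauss \<inter> cball 0 1) \<le>
          card ((\<lambda>(x, y). Complex (of_int x) (of_int y)) ` ({-1..1::int} \<times> {-1..1::int}))"
    using gauss_cball_subset_grid[of 1] by (intro card_mono finite_imageI) simp_all
  also have "\<dots> \<le> card ({-1..1::int} \<times> {-1..1::int})"
    by (rule card_image_le) simp
  finally show ?thesis
    by (simp add: card_cartesian_product)
qed

lemma gauss_division:
  assumes "g \<noteq> 0"
  obtains k where "k \<in> gauss" "norm (a - g * k) < norm g"
proof
  define w where "w = a / g"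
  define k where "k = Complex (of_int (round (Re w))) (of_int (round (Im w)))"
  show "k \<in> gauss"
    by (simp add: k_def gauss_def)
  have "\<bar>Re (w - k)\<bar> \<le> 1/2" "\<bar>Im (w - k)\<bar> \<le> 1/2"
    using of_int_round_abs_le[of "Re w"] of_int_round_abs_le[of "Im w"]
    by (simp_all add: k_def abs_minus_commute)
  then have "(Re (w - k))^2 \<le> (1/2)^2" "(Im (w - k))^2 \<le> (1/2)^2"
    by (simp_all only: abs_le_square_iff[symmetric] abs_divide abs_one abs_numeral)
  then have "(norm (w - k))^2 < 1^2"
    by (simp add: cmod_power2 power_divide)
  then have "norm (w - k) < 1"
    by (rule power2_less_imp_less) simp
  moreover have "a - g * k = g * (w - k)"
    using assms by (simp add: w_def algebra_simps)
  ultimately show "norm (a - g * k) < norm g"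
    using assms by (simp add: norm_mult)
qed

lemma gdvd_trans: "gdvd a b \<Longrightarrow> gdvd b c \<Longrightarrow> gdvd a c"
  unfolding gdvd_def by (metis gauss_mult mult.assoc)

lemma gdvd_add: "gdvd d a \<Longrightarrow> gdvd d b \<Longrightarrow> gdvd d (a + b)"
  unfolding gdvd_def by (metis gauss_add distrib_left)

lemma gdvd_diff: "gdvd d a \<Longrightarrow> gdvd d b \<Longrightarrow> gdvd d (a - b)"
  unfolding gdvd_def by (metis gauss_diff right_diff_distrib)

lemma gdvd_mult_left: "gdvd d a \<Longrightarrow> c \<in> gauss \<Longrightarrow> gdvd d (c * a)"
  unfolding gdvd_def by (metis gauss_mult mult.left_commute)

lemma gdvd_mult_right: "gdvd d a \<Longrightarrow> c \<in> gauss \<Longrightarrow> gdvd d (a * c)"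
  using gdvd_mult_left[of d a c] by (simp add: mult.commute)

lemma gdvd_mult_self: "d \<in> gauss \<Longrightarrow> c \<in> gauss \<Longrightarrow> gdvd d (c * d)"
  unfolding gdvd_def by (metis gauss_mult mult.commute)

lemma gdvd_imp_div_gauss: "gdvd t a \<Longrightarrow> t \<noteq> 0 \<Longrightarrow> a / t \<in> gauss"
  unfolding gdvd_def by auto

lemma gdvd_div_self: "gdvd t a \<Longrightarrow> t \<noteq> 0 \<Longrightarrow> gdvd (a / t) a"
  unfolding gdvd_def by (auto intro!: bexI[of _ t])

lemma gdvd_imp_norm_le:
  assumes "gdvd t a" "a \<noteq> 0"
  shows "norm t \<le> norm a"
proof -
  obtain c where c: "c \<in> gauss" "a = t * c"
    using assms(1) by (auto simp: gdvd_def)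
  then have "1 \<le> norm c"
    using assms(2) gauss_norm_ge_1 by auto
  then show ?thesis
    using c(2) by (simp add: norm_mult mult_le_cancel_left1)
qed

lemma gcoprime_gdvd_right: "gcoprime a b \<Longrightarrow> gdvd c b \<Longrightarrow> gcoprime a c"
  unfolding gcoprime_def by (blast intro: gdvd_trans)

lemma gauss_bezout:
  assumes a: "a \<in> gauss" and b: "b \<in> gauss" "b \<noteq> 0"
  obtains g x y where "x \<in> gauss" "y \<in> gauss" "g = x * a + y * b" "gdvd g a" "gdvd g b"
proof -
  define lin where "lin w \<longleftrightarrow> (\<exists>x\<in>gauss. \<exists>y\<in>gauss. w = x * a + y * b)" for w
  have lin_gauss: "w \<in> gauss" if "lin w" for w
    using that a b by (auto simp: lin_def)
  have lin_a: "lin a"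
    unfolding lin_def by (rule bexI[of _ 1], rule bexI[of _ 0]) simp_all
  have lin_b: "lin b"
    unfolding lin_def by (rule bexI[of _ 0], rule bexI[of _ 1]) simp_all
  then have "b \<noteq> 0 \<and> lin b"
    using b by simp
  then obtain g where g: "g \<noteq> 0" "lin g"
    and g_min: "\<And>w. w \<noteq> 0 \<and> lin w \<Longrightarrow> nat \<lfloor>(norm g)^2\<rfloor> \<le> nat \<lfloor>(norm w)^2\<rfloor>"
    using ex_has_least_nat[of "\<lambda>w. w \<noteq> 0 \<and> lin w" b "\<lambda>w. nat \<lfloor>(norm w)^2\<rfloor>"] by blast
  then obtain x y where xy: "x \<in> gauss" "y \<in> gauss" "g = x * a + y * b"
    by (auto simp: lin_def)
  have g_dvd: "gdvd g c" if "lin c" for c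
  proof -
    obtain u v where uv: "u \<in> gauss" "v \<in> gauss" "c = u * a + v * b"
      using \<open>lin c\<close> by (auto simp: lin_def)
    obtain k where k: "k \<in> gauss" and less: "norm (c - g * k) < norm g"
      using gauss_division[OF \<open>g \<noteq> 0\<close>] by blast
    have "c - g * k = (u - k * x) * a + (v - k * y) * b"
      using uv(3) xy(3) by (simp add: algebra_simps)
    then have "lin (c - g * k)"
      using uv xy k by (auto simp: lin_def)
    moreover have "nat \<lfloor>(norm (c - g * k))^2\<rfloor> < nat \<lfloor>(norm g)^2\<rfloor>"
      using less lin_gauss \<open>lin c\<close> \<open>lin g\<close> k
      by (intro gauss_norm_less_imp_floor_less) auto
    ultimately have "c - g * k = 0"
      using g_min[of "c - g * k"] by (metis leD)
    then have "c = g * k"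
      by simp
    then show ?thesis
      using k lin_gauss \<open>lin c\<close> \<open>lin g\<close> by (auto simp: gdvd_def)
  qed
  show thesis
    using that xy g_dvd lin_a lin_b by blast
qed

lemma gcoprime_imp_bezout:
  assumes "a \<in> gauss" "b \<in> gauss" "b \<noteq> 0" "gcoprime a b"
  obtains x y where "x \<in> gauss" "y \<in> gauss" "x * a + y * b = 1"
proof -
  obtain g x y where xy: "x \<in> gauss" "y \<in> gauss" "g = x * a + y * b"
    and "gdvd g a" "gdvd g b"
    by (rule gauss_bezout[OF assms(1-3)])
  then have "gdvd g 1"
    using assms(4) unfolding gcoprime_def by blast
  then obtain c where c: "c \<in> gauss" "1 = g * c"
    unfolding gdvd_def by blast
  show thesis
  proof
    show "c * x \<in> gauss" "c * y \<in> gauss"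
      using c xy by auto
    show "c * x * a + c * y * b = 1"
      using c xy by (simp add: algebra_simps)
  qed
qed

lemma bezout_imp_gcoprime:
  assumes "x \<in> gauss" "y \<in> gauss" "x * a + y * b = 1"
  shows "gcoprime a b"
  unfolding gcoprime_def
proof (intro allI impI)
  fix d assume "gdvd d a \<and> gdvd d b"
  then have "gdvd d (x * a + y * b)"
    using assms by (intro gdvd_add gdvd_mult_left) auto
  then show "gdvd d 1"
    using assms by simp
qed

lemma gcoprime_gdvd_mult:
  assumes "gcoprime a c" "gdvd c (a * x)" "a \<in> gauss" "x \<in> gauss" "c \<noteq> 0"
  shows "gdvd c x"
proof -
  have c: "c \<in> gauss"
    using assms(2) by (simp add: gdvd_def)
  obtain u v where uv: "u \<in> gauss" "v \<in> gauss" "u * a + v * c = 1"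
    using gcoprime_imp_bezout[OF assms(3) c assms(5,1)] by blast
  have "gdvd c (u * (a * x) + (v * x) * c)"
    using gdvd_mult_left[OF assms(2) uv(1)] gdvd_mult_self[OF c, of "v * x"] uv(2) assms(4)
    by (intro gdvd_add) auto
  moreover have "u * (a * x) + (v * x) * c = (u * a + v * c) * x"
    by (simp add: algebra_simps)
  ultimately show ?thesis
    using uv(3) by simp
qed

lemma gcoprime_pairs_same_ratio:
  assumes "b \<in> gauss" "r \<in> gauss" "r \<noteq> 0" "gcoprime b r"
  shows "{(a, q). a \<in> gauss \<and> q \<in> gauss - {0} \<and> gcoprime a q \<and> a * r = b * q}
           \<subseteq> (\<lambda>u. (u * b, u * r)) ` (gauss \<inter> cball 0 1)"
proof
  fix p assume "p \<in> {(a, q). a \<in> gauss \<and> q \<in> gauss - {0} \<and> gcoprime a q \<and> a * r = b * q}"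
  then obtain a q where p: "p = (a, q)" and a: "a \<in> gauss" and q: "q \<in> gauss" "q \<noteq> 0"
    and "gcoprime a q" and eq: "a * r = b * q"
    by blast
  have "gdvd q (a * r)"
    using gdvd_mult_self[of q b] eq q assms(1) by simp
  then have "gdvd q r"
    using gcoprime_gdvd_mult[OF \<open>gcoprime a q\<close> _ a assms(2)] q by blast
  then obtain c where c: "c \<in> gauss" "r = q * c"
    by (auto simp: gdvd_def)
  have "gdvd r (b * q)"
    using gdvd_mult_self[of r a] eq assms(2) a by simp
  then have "gdvd r q"
    using gcoprime_gdvd_mult[OF assms(4) _ assms(1)] q assms(3) by blast
  then obtain u where u: "u \<in> gauss" "q = u * r"
    by (auto simp: gdvd_def mult.commute)
  have "r * (u * c) = r * 1"
    using c u by (simp add: algebra_simps)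
  then have "u * c = 1"
    using assms(3) by simp
  moreover have "c \<noteq> 0"
    using \<open>u * c = 1\<close> by auto
  ultimately have "norm u * norm c = 1" "1 \<le> norm c"
    using c(1) gauss_norm_ge_1[of c] by (auto simp flip: norm_mult)
  then have "norm u \<le> 1"
    using mult_left_mono[of 1 "norm c" "norm u"] by simp
  moreover have "a = u * b"
    using eq u assms(3) by (simp add: mult.commute mult.left_commute)
  ultimately show "p \<in> (\<lambda>u. (u * b, u * r)) ` (gauss \<inter> cball 0 1)"
    using p u by auto
qed

lemma divisor_repsD:
  assumes "divisor_reps T r" "r \<noteq> 0" "t \<in> T"
  shows "gdvd t r" "t \<noteq> 0"
  using assms by (auto simp: divisor_reps_def gdvd_def)

lemma finite_divisor_reps:
  assumes "divisor_reps T r" "r \<noteq> 0"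
  shows "finite T"
proof (rule finite_subset[OF _ finite_gauss_cball])
  show "T \<subseteq> gauss \<inter> cball 0 (norm r)"
    using divisor_repsD[OF assms] gdvd_imp_norm_le assms(2) by (auto simp: gdvd_def)
qed

lemma divisor_reps_coprime_quotients:
  assumes T: "divisor_reps T r" and q: "q \<in> gauss" and r: "r \<in> gauss" "r \<noteq> 0"
  obtains t where "t \<in> T" "gdvd t q" "gcoprime (q / t) (r / t)"
proof -
  obtain g x y where xy: "x \<in> gauss" "y \<in> gauss" "g = x * q + y * r"
    and g: "gdvd g q" "gdvd g r"
    by (rule gauss_bezout[OF q r])
  then obtain t where t: "t \<in> T" "gassoc g t"
    using T by (auto simp: divisor_reps_def)
  then obtain e where e: "e \<in> gauss" "t = g * e"
    by (auto simp: gassoc_def gdvd_def)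
  have "t \<noteq> 0"
    using divisor_repsD[OF T r(2) t(1)] by simp
  have "(x * e) * (q / t) + (y * e) * (r / t) = g * e / t"
    by (simp add: xy(3) algebra_simps add_divide_distrib)
  also have "\<dots> = 1"
    using \<open>t \<noteq> 0\<close> e(2) by simp
  finally have "gcoprime (q / t) (r / t)"
    using xy e by (intro bezout_imp_gcoprime[of "x * e" "y * e"]) auto
  moreover have "gdvd t q"
    using t(2) g(1) by (auto simp: gassoc_def intro: gdvd_trans)
  ultimately show thesis
    using that t(1) by blast
qed

lemma gcoprime_cross_diff:
  assumes "gcoprime q' r'" "gcoprime b r" "gdvd r' r" "r \<noteq> 0"
    and "a \<in> gauss" "b \<in> gauss" "q' \<in> gauss"
  shows "gcoprime (a * r' - b * q') r'"
  unfolding gcoprime_def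
proof (intro allI impI)
  fix d assume d: "gdvd d (a * r' - b * q') \<and> gdvd d r'"
  then have "gdvd d (a * r')"
    using assms(5) gdvd_mult_left by blast
  then have "gdvd d (a * r' - (a * r' - b * q'))"
    using d gdvd_diff by blast
  then have "gdvd d (b * q')"
    by simp
  moreover have "gdvd d r"
    using d assms(3) by (blast intro: gdvd_trans)
  moreover from this have "d \<noteq> 0"
    using assms(4) by (auto simp: gdvd_def)
  ultimately have "gdvd d q'"
    using gcoprime_gdvd_mult gcoprime_gdvd_right[OF assms(2)] assms(6,7) by blast
  then show "gdvd d 1"
    using d assms(1) by (auto simp: gcoprime_def)
qed

lemma gcong_cross_diff_inverse:
  assumes "gcong (bbar * b) 1 r" "gdvd r' r" "a \<in> gauss" "bbar \<in> gauss" "q' \<in> gauss"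
  shows "gcong q' (- bbar * (a * r' - b * q')) r'"
proof -
  have r': "r' \<in> gauss"
    using assms(2) by (simp add: gdvd_def)
  have "gdvd r' (bbar * b - 1)"
    using assms(1,2) by (auto simp: gcong_def intro: gdvd_trans)
  then have "gdvd r' ((bbar * b - 1) * q')"
    using assms(5) by (rule gdvd_mult_right)
  moreover have "gdvd r' ((bbar * a) * r')"
    using r' assms(3,4) by (intro gdvd_mult_self) auto
  ultimately have "gdvd r' ((bbar * a) * r' - (bbar * b - 1) * q')"
    by (rule gdvd_diff[rotated])
  moreover have "(bbar * a) * r' - (bbar * b - 1) * q' = q' - (- bbar * (a * r' - b * q'))"
    by (simp add: algebra_simps)
  ultimately show ?thesis
    by (simp add: gcong_def)
qed

lemma S_t_subset_cball:
  assumes "S \<subseteq> cball 0 R" "t \<noteq> 0"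
  shows "S_t S t \<subseteq> cball 0 (R / norm t)"
proof
  fix q assume "q \<in> S_t S t"
  then have "norm t * norm q \<le> R"
    using assms(1) by (auto simp: S_t_def norm_mult)
  then show "q \<in> cball 0 (R / norm t)"
    using assms(2) by (simp add: field_simps)
qed

lemma finite_S_t:
  assumes "finite S" "t \<noteq> 0"
  shows "finite (S_t S t)"
proof (rule finite_subset)
  show "S_t S t \<subseteq> (\<lambda>s. s / t) ` S"
    using assms(2) by (force simp: S_t_def)
qed (use assms(1) in simp)

text \<open>The supremum in \<open>A_t\<close> runs only over centres in the disc of radius \<open>sqrt Q / norm t\<close>;
  since \<open>S_t S t\<close> lies in that disc, moving an arbitrary centre to its nearest point
  in the disc does not lose any point of the ball.\<close>
lemma card_cball_le_A_t:
  assumes "finite S" "S \<subseteq> cball 0 (sqrt (real Q))" "t \<noteq> 0"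
  shows "real (card {q \<in> S_t S t \<inter> cball x u. gcong q l k}) \<le> A_t S Q t u k l"
proof -
  define D where "D = cball (0::complex) (sqrt (real Q) / norm t)"
  define y where "y = closest_point D x"
  have "D \<noteq> {}"
    by (simp add: D_def not_less)
  then have y: "y \<in> D"
    unfolding y_def D_def by (intro closest_point_in_set) auto
  have "dist y q \<le> dist x q" if "q \<in> S_t S t" for q
  proof -
    have "q \<in> D"
      using S_t_subset_cball[OF assms(2,3)] that by (auto simp: D_def)
    then have "dist y q = dist (closest_point D x) (closest_point D q)"
      by (simp add: y_def closest_point_self)
    also have "\<dots> \<le> dist x q"
      using \<open>D \<noteq> {}\<close> by (intro closest_point_lipschitz) (auto simp: D_def)
    finally show ?thesis .
  qed
  then have "{q \<in> S_t S t \<inter> cball x u. gcong q l k} \<subseteq> {q \<in> S_t S t \<inter> cball y u. gcong q l k}"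
    by (auto simp: dist_commute[of x] dist_commute[of y] intro: order_trans)
  then have "card {q \<in> S_t S t \<inter> cball x u. gcong q l k} \<le> card {q \<in> S_t S t \<inter> cball y u. gcong q l k}"
    by (intro card_mono finite_subset[OF _ finite_S_t[OF assms(1,3)]]) auto
  also have "real \<dots> \<le> A_t S Q t u k l"
    unfolding A_t_def
  proof (rule cSUP_upper)
    show "y \<in> {y. norm y \<le> sqrt (real Q) / norm t}"
      using y by (simp add: D_def)
    show "bdd_above ((\<lambda>y. real (card {q \<in> S_t S t \<inter> cball y u. gcong q l k})) `
            {y. norm y \<le> sqrt (real Q) / norm t})"
      using finite_S_t[OF assms(1,3)] by (intro bdd_aboveI[of _ "real (card (S_t S t))"]) (auto intro: card_mono)
  qed
  finally show ?thesis
    by simp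
qed

lemma off_line_pair_bounds:
  fixes a b q q' r t m z :: complex
  assumes q: "q \<noteq> 0" "norm q \<le> sqrt (real Q)" and r: "r \<noteq> 0" and t: "t \<noteq> 0"
    and z: "sqrt \<Delta> \<le> norm z" "0 < \<Delta>"
    and close: "norm (a / q - (b / r + z)) \<le> sqrt \<Delta>"
    and m: "t * m = a * r - b * q" and q': "q = t * q'"
  shows "norm m \<le> 3 * norm (r * z) * sqrt (real Q) / norm t"
    and "q' \<in> cball (m / (z * r)) (sqrt (real Q * \<Delta>) / (norm z * norm t))"
proof -
  have "z \<noteq> 0"
    using z by auto
  have diff: "a / q - (b / r + z) = t * m / (q * r) - z"
    unfolding m using q(1) r by (simp add: field_simps)
  have "norm (t * m / (q * r)) \<le> norm (t * m / (q * r) - z) + norm z"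
    using norm_triangle_sub[of "t * m / (q * r)" z] by linarith
  also have "\<dots> \<le> 2 * norm z"
    using close z(1) by (simp add: diff)
  finally have "norm t * norm m \<le> 2 * norm z * (norm q * norm r)"
    using q(1) r by (simp add: norm_mult norm_divide pos_divide_le_eq)
  also have "\<dots> \<le> 2 * norm z * (sqrt (real Q) * norm r)"
    using q(2) by (intro mult_left_mono mult_right_mono) auto
  also have "\<dots> \<le> 3 * norm (r * z) * sqrt (real Q)"
    by (simp add: norm_mult)
  finally show "norm m \<le> 3 * norm (r * z) * sqrt (real Q) / norm t"
    using t by (simp add: pos_le_divide_eq mult.commute)
  have "m / (z * r) - q' = (q / z) * (t * m / (q * r) - z) / t"
    using q(1) r t \<open>z \<noteq> 0\<close> by (simp add: q' field_simps)
  then have "dist q' (m / (z * r)) = norm q / norm z * norm (a / q - (b / r + z)) / norm t"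
    by (simp add: dist_norm norm_minus_commute[of q'] norm_mult norm_divide diff)
  also have "\<dots> \<le> sqrt (real Q) / norm z * sqrt \<Delta> / norm t"
    using q(2) close by (intro divide_right_mono mult_mono) auto
  finally show "q' \<in> cball (m / (z * r)) (sqrt (real Q * \<Delta>) / (norm z * norm t))"
    by (simp add: dist_commute real_sqrt_mult)
qed

context
  fixes Q :: nat and S :: "complex set" and \<Delta> :: real and b r z bbar :: complex
    and T :: "complex set"
  assumes S: "S \<subseteq> cball 0 (sqrt (real Q)) \<inter> (gauss - {0})"
    and Delta_pos: "\<Delta> > 0"
    and b: "b \<in> gauss" and r: "r \<in> gauss" "r \<noteq> 0" and coprime_br: "gcoprime b r"
    and z: "sqrt \<Delta> \<le> norm z"
    and bbar: "bbar \<in> gauss" "gcong (bbar * b) 1 r"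
    and T: "divisor_reps T r"
begin

lemma finite_S: "finite S"
  using S by (intro finite_subset[OF _ finite_gauss_cball]) auto

lemma off_line_pair_parametrization:
  assumes a: "a \<in> gauss" and q: "q \<in> S"
    and close: "norm (a / q - (b / r + z)) \<le> sqrt \<Delta>" and off: "a * r \<noteq> b * q"
  obtains t m q' where "t \<in> T"
    "m \<in> gauss" "0 < norm m" "norm m \<le> 3 * norm (r * z) * sqrt (real Q) / norm t"
    "gcoprime m (r / t)"
    "q' \<in> S_t S t" "q' \<in> cball (m / (z * r)) (sqrt (real Q * \<Delta>) / (norm z * norm t))"
    "gcong q' (- bbar * m) (r / t)"
    "(a, q) = ((t * m + b * (t * q')) / r, t * q')"
proof -
  have q_gauss: "q \<in> gauss" "q \<noteq> 0" and q_le: "norm q \<le> sqrt (real Q)"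
    using S q by auto
  obtain t where t: "t \<in> T" "gdvd t q" "gcoprime (q / t) (r / t)"
    by (rule divisor_reps_coprime_quotients[OF T q_gauss(1) r])
  have "gdvd t r" "t \<noteq> 0"
    using divisor_repsD[OF T r(2) t(1)] by auto
  define q' where "q' = q / t"
  define m where "m = a * (r / t) - b * q'"
  have q': "q' \<in> gauss" "q = t * q'"
    using gdvd_imp_div_gauss[OF t(2) \<open>t \<noteq> 0\<close>] \<open>t \<noteq> 0\<close> by (auto simp: q'_def)
  have "r / t \<in> gauss" "gdvd (r / t) r"
    using gdvd_imp_div_gauss gdvd_div_self \<open>gdvd t r\<close> \<open>t \<noteq> 0\<close> by auto
  have m_gauss: "m \<in> gauss"
    unfolding m_def using a b q'(1) \<open>r / t \<in> gauss\<close> by (intro gauss_diff gauss_mult)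
  have tm: "t * m = a * r - b * q"
    unfolding m_def q'(2) using \<open>t \<noteq> 0\<close> by (simp add: field_simps)
  have "m \<noteq> 0"
    using off tm by auto
  have bounds: "norm m \<le> 3 * norm (r * z) * sqrt (real Q) / norm t"
    "q' \<in> cball (m / (z * r)) (sqrt (real Q * \<Delta>) / (norm z * norm t))"
    using off_line_pair_bounds[OF q_gauss(2) q_le r(2) \<open>t \<noteq> 0\<close> z Delta_pos close tm q'(2)] by auto
  moreover have "gcoprime m (r / t)"
    unfolding m_def q'_def
    by (rule gcoprime_cross_diff[OF t(3) coprime_br \<open>gdvd (r / t) r\<close> r(2) a b q'(1)[unfolded q'_def]])
  moreover have "gcong q' (- bbar * m) (r / t)"
    unfolding m_def
    by (rule gcong_cross_diff_inverse[OF bbar(2) \<open>gdvd (r / t) r\<close> a bbar(1) q'(1)])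
  moreover have "q' \<in> S_t S t"
    using q q' by (simp add: S_t_def)
  moreover have "(a, q) = ((t * m + b * (t * q')) / r, t * q')"
    using r(2) by (simp add: tm q'(2)[symmetric])
  ultimately show thesis
    using that t(1) m_gauss \<open>m \<noteq> 0\<close> bounds by simp
qed

lemma card_off_line_pairs_le:
  "real (card {(a, q). a \<in> gauss \<and> q \<in> S \<and> gcoprime a q \<and>
                norm (a / q - (b / r + z)) \<le> sqrt \<Delta> \<and> a * r \<noteq> b * q})
     \<le> (\<Sum>t\<in>T. \<Sum>m\<in>{m\<in>gauss. 0 < norm m \<and>
                      norm m \<le> 3 * norm (r * z) * sqrt (real Q) / norm t \<and>
                      gcoprime m (r / t)}.
          A_t S Q t (sqrt (real Q * \<Delta>) / (norm z * norm t)) (r / t) (- bbar * m))"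
  (is "real (card ?P) \<le> (\<Sum>t\<in>T. \<Sum>m\<in>?M t. A_t S Q t (?u t) (r / t) (- bbar * m))")
proof -
  define C where "C t m = {q' \<in> S_t S t \<inter> cball (m / (z * r)) (?u t). gcong q' (- bbar * m) (r / t)}"
    for t m
  define F where "F = (\<lambda>(t, m, q'). ((t * m + b * (t * q')) / r, t * q'))"
  have fin_T: "finite T"
    using finite_divisor_reps[OF T r(2)] .
  have fin_M: "finite (?M t)" for t
    by (rule finite_subset[OF _ finite_gauss_cball]) auto
  have t0: "t \<noteq> 0" if "t \<in> T" for t
    using divisor_repsD[OF T r(2) that] by simp
  have fin_C: "finite (C t m)" if "t \<in> T" for t m
    unfolding C_def by (rule finite_subset[OF _ finite_S_t[OF finite_S t0[OF that]]]) auto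
  have "?P \<subseteq> F ` (SIGMA t:T. SIGMA m:?M t. C t m)"
  proof clarify
    fix a q assume "a \<in> gauss" "q \<in> S" "norm (a / q - (b / r + z)) \<le> sqrt \<Delta>" "a * r \<noteq> b * q"
    then obtain t m q' where "t \<in> T" "m \<in> ?M t" "q' \<in> C t m"
      and "(a, q) = F (t, m, q')"
      by (rule off_line_pair_parametrization) (auto simp: C_def F_def)
    then show "(a, q) \<in> F ` (SIGMA t:T. SIGMA m:?M t. C t m)"
      by blast
  qed
  then have "card ?P \<le> card (SIGMA t:T. SIGMA m:?M t. C t m)"
    using fin_T fin_M fin_C by (intro surj_card_le) auto
  also have "\<dots> = (\<Sum>t\<in>T. \<Sum>m\<in>?M t. card (C t m))"
    using fin_T fin_M fin_C by simp
  finally have "real (card ?P) \<le> (\<Sum>t\<in>T. \<Sum>m\<in>?M t. real (card (C t m)))"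
    by (simp flip: of_nat_sum)
  also have "\<dots> \<le> (\<Sum>t\<in>T. \<Sum>m\<in>?M t. A_t S Q t (?u t) (r / t) (- bbar * m))"
    using S t0 unfolding C_def by (intro sum_mono card_cball_le_A_t finite_S) auto
  finally show ?thesis .
qed

lemma card_on_line_pairs_le:
  "card {(a, q). a \<in> gauss \<and> q \<in> S \<and> gcoprime a q \<and>
           norm (a / q - (b / r + z)) \<le> sqrt \<Delta> \<and> a * r = b * q} \<le> 9"
proof -
  have "card {(a, q). a \<in> gauss \<and> q \<in> S \<and> gcoprime a q \<and>
           norm (a / q - (b / r + z)) \<le> sqrt \<Delta> \<and> a * r = b * q}
        \<le> card ((\<lambda>u. (u * b, u * r)) ` (gauss \<inter> cball 0 1))"
    using S gcoprime_pairs_same_ratio[OF b r coprime_br]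
    by (intro card_mono finite_imageI finite_gauss_cball) auto
  also have "\<dots> \<le> card (gauss \<inter> cball 0 1)"
    by (rule card_image_le[OF finite_gauss_cball])
  finally show ?thesis
    using card_gauss_unit_cball_le by linarith
qed

lemma Pcount_le:
  "real (Pcount S \<Delta> (b / r + z))
     \<le> 9 + (\<Sum>t\<in>T. \<Sum>m\<in>{m\<in>gauss. 0 < norm m \<and>
                      norm m \<le> 3 * norm (r * z) * sqrt (real Q) / norm t \<and>
                      gcoprime m (r / t)}.
          A_t S Q t (sqrt (real Q * \<Delta>) / (norm z * norm t)) (r / t) (- bbar * m))"
proof -
  let ?P = "\<lambda>on. {(a, q). a \<in> gauss \<and> q \<in> S \<and> gcoprime a q \<and>
                  norm (a / q - (b / r + z)) \<le> sqrt \<Delta> \<and> (a * r = b * q) = on}"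
  have "Pcount S \<Delta> (b / r + z) = card (?P True \<union> ?P False)"
    unfolding Pcount_def by (rule arg_cong[where f = card]) auto
  also have "\<dots> \<le> card (?P True) + card (?P False)"
    by (rule card_Un_le)
  finally show ?thesis
    using card_on_line_pairs_le card_off_line_pairs_le by simp
qed

end

theorem lemma3:
  shows "\<exists>c3::real. c3 > 0 \<and>
    (\<forall>(Q::nat) (S::complex set) (\<Delta>::real) (b::complex) (r::complex) (z::complex)
        (bbar::complex) (T::complex set).
      S \<subseteq> cball 0 (sqrt (real Q)) \<inter> (gauss - {0}) \<longrightarrow>
      \<Delta> > 0 \<longrightarrow>
      b \<in> gauss \<longrightarrow> r \<in> gauss \<longrightarrow> gcoprime b r \<longrightarrow>
      0 < norm r \<longrightarrow> norm r \<le> \<Delta> powr (-1/4) \<longrightarrow>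
      sqrt \<Delta> \<le> norm z \<longrightarrow> norm z < 2 / (norm r * \<Delta> powr (-1/4)) \<longrightarrow>
      bbar \<in> gauss \<longrightarrow> gcong (bbar * b) 1 r \<longrightarrow>
      divisor_reps T r \<longrightarrow>
      real (Pcount S \<Delta> (b / r + z)) \<le>
        16 + c3 * (\<Sum>t\<in>T. \<Sum>m\<in>{m\<in>gauss. 0 < norm m \<and>
                      norm m \<le> 3 * norm (r * z) * sqrt (real Q) / norm t \<and>
                      gcoprime m (r / t)}.
                 A_t S Q t (sqrt (real Q * \<Delta>) / (norm z * norm t)) (r / t) (- bbar * m)))"
  by (intro exI[of _ 1] conjI allI impI) (auto intro: order_trans[OF Pcount_le])

end
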